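(* Let $f,g\in\mathcal{S}$ and $\tau\in\mathbb{C}$, $\tau\ne0$. (1) If $\beta:=\beta_f(\tau)>0$, $\varepsilon\in(0,\beta)$, and there is $r_0\in(0,1)$ with $\sup_{r_0<|z|<1}|N_g(z)-N_f(z)|(1-|z|^2)<\varepsilon/|\tau|$, then $|\beta_g(\tau)-\beta_f(\tau)|\le\varepsilon$. (2) If $\beta_f(\tau)=0$, $\varepsilon>0$, and there is $r_0\in(0,1)$ with $\sup_{r_0<|z|<1}|N_g(z)-N_f(z)|(1-|z|^2)<\varepsilon/|\tau|$, then $\beta_g(\tau)\le\varepsilon$.
   Context: $\Delta$ unit disk; $\mathcal{S}$ the class of univalent $f$ on $\Delta$ with $f(0)=0,f'(0)=1$; $N_f=f''/f'$. For $\tau\in\mathbb{C}$, $[f'(z)]^\tau=\exp(\tau\log f'(z))$ with $\log f'(0)=0$, and $\beta_f(\tau)=\limsup_{r\to1^-}\frac{\log\int_{-\pi}^{\pi}|[f'(re^{i\theta})]^\tau|d\theta}{|\log(1-r)|}$. *)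

theory Defs
  imports "HOL-Analysis.Analysis" "HOL-Library.Liminf_Limsup"
begin

definition classS :: "(complex \<Rightarrow> complex) \<Rightarrow> bool" where
  "classS f \<longleftrightarrow> f holomorphic_on ball 0 1 \<and> inj_on f (ball 0 1) \<and> f 0 = 0 \<and> deriv f 0 = 1"

definition preSchwarz :: "(complex \<Rightarrow> complex) \<Rightarrow> complex \<Rightarrow> complex" where
  "preSchwarz f z = deriv (deriv f) z / deriv f z"

definition logderiv :: "(complex \<Rightarrow> complex) \<Rightarrow> complex \<Rightarrow> complex" where
  "logderiv f = (SOME L. L holomorphic_on ball 0 1 \<and> (\<forall>z\<in>ball 0 1. exp (L z) = deriv f z) \<and> L 0 = 0)"

definition derpow :: "(complex \<Rightarrow> complex) \<Rightarrow> complex \<Rightarrow> complex \<Rightarrow> complex" where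
  "derpow f \<tau> z = exp (\<tau> * logderiv f z)"

definition betaSpec :: "(complex \<Rightarrow> complex) \<Rightarrow> complex \<Rightarrow> ereal" where
  "betaSpec f \<tau> = Limsup (at_left (1::real))
     (\<lambda>r. ereal (ln (integral {-pi..pi} (\<lambda>\<theta>. norm (derpow f \<tau> (of_real r * cis \<theta>))))
                 / \<bar>ln (1 - r)\<bar>))"

end

(*
  The difference h = log g' - log f' has derivative N_g - N_f, so the hypothesis gives
  |h'(z)| <= c / (1 - |z|) near the unit circle with c = epsilon / |tau|. Integrating along
  radii, |h(z)| <= M + c log (1 / (1 - |z|)), hence on the circle |z| = r
  |(g')^tau| <= e^(|tau| M) (1 - r)^(-|tau| c) |(f')^tau|, which shifts the integral means
  spectrum by at most |tau| c = epsilon; the same holds with f and g exchanged.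
  For the two-sided estimate beta_f must be finite. This follows from the same argument
  applied to log f' itself, once |N_f(z)| (1 - |z|) is bounded uniformly over the class S.
  Instead of the Bieberbach estimate we obtain such a crude bound from Schottky's theorem:
  every f in S omits a value of modulus at most 2, so the functions of S are uniformly bounded
  on the disc of radius 1/2; applied to Koebe transforms, Cauchy's estimate then bounds f''/f'.
*)
theory Submission
  imports Defs "HOL-Complex_Analysis.Complex_Analysis"
begin

lemma classS_D:
  assumes "classS f"
  shows "f holomorphic_on ball 0 1" "inj_on f (ball 0 1)" "f 0 = 0" "deriv f 0 = 1"
    "deriv f holomorphic_on ball 0 1" "\<And>z. z \<in> ball 0 1 \<Longrightarrow> deriv f z \<noteq> 0"
  using assms holomorphic_injective_imp_regular[of f "ball 0 1"] unfolding classS_def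
  by (auto intro: holomorphic_deriv)

lemma classS_logderiv_exists:
  assumes "classS f"
  shows "\<exists>L. L holomorphic_on ball 0 1 \<and> (\<forall>z\<in>ball 0 1. exp (L z) = deriv f z) \<and> L 0 = 0"
proof -
  note f = classS_D[OF assms]
  obtain L where L: "L holomorphic_on ball 0 1" "\<And>z. z \<in> ball 0 1 \<Longrightarrow> deriv f z = exp (L z)"
    using contractible_imp_holomorphic_log[OF f(5) convex_imp_contractible[OF convex_ball] f(6)]
    by blast
  have "exp (L 0) = 1"
    using L(2)[of 0] f(4) by simp
  then show ?thesis
    using L by (intro exI[of _ "\<lambda>z. L z - L 0"]) (auto intro!: holomorphic_intros simp: exp_diff)
qed

lemma classS_logderiv:
  assumes "classS f"
  shows "logderiv f holomorphic_on ball 0 1"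
    and "\<And>z. z \<in> ball 0 1 \<Longrightarrow> exp (logderiv f z) = deriv f z"
    and "logderiv f 0 = 0"
  using someI_ex[OF classS_logderiv_exists[OF assms]] unfolding logderiv_def by auto

lemma deriv_logderiv:
  assumes "classS f" and z: "z \<in> ball 0 1"
  shows "deriv (logderiv f) z = preSchwarz f z"
proof -
  note f = classS_D[OF assms(1)] and L = classS_logderiv[OF assms(1)]
  have "((\<lambda>w. exp (logderiv f w)) has_field_derivative exp (logderiv f z) * deriv (logderiv f) z) (at z)"
    by (rule derivative_eq_intros holomorphic_derivI[OF L(1) open_ball z])+ auto
  then have "(deriv f has_field_derivative deriv f z * deriv (logderiv f) z) (at z)"
    using L(2) z by (auto intro: has_field_derivative_transform_within_open[where S="ball 0 1"])
  then have "deriv (deriv f) z = deriv f z * deriv (logderiv f) z"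
    using DERIV_unique holomorphic_derivI[OF f(5) open_ball z] by blast
  then show ?thesis
    using f(6)[OF z] unfolding preSchwarz_def by simp
qed

section \<open>Logarithmic growth from a Bloch-type bound\<close>

lemma radial_increment_le:
  fixes h :: "complex \<Rightarrow> complex"
  assumes hol: "h holomorphic_on ball 0 1" and a: "0 \<le> a" "a \<le> norm z" and z: "norm z < 1"
    and bnd: "\<And>w. a < norm w \<Longrightarrow> norm w < norm z \<Longrightarrow> norm (deriv h w) * (1 - norm w) \<le> c"
  shows "norm (h z - h (of_real a * sgn z)) \<le> c * (ln (1 - a) - ln (1 - norm z))"
proof -
  define u where "u = sgn z"
  have z_eq: "of_real (norm z) * u = z"
    unfolding u_def by (cases "z = 0") (simp_all add: sgn_div_norm scaleR_conv_of_real)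
  have "norm (h (of_real (norm z) * u) - h (of_real a * u))
      \<le> (- c * ln (1 - norm z)) - (- c * ln (1 - a))"
  proof (cases "a = norm z")
    case False
    then have "z \<noteq> 0"
      using a by auto
    then have u: "norm u = 1"
      unfolding u_def by (simp add: norm_sgn)
    have in_ball: "of_real t * u \<in> ball 0 1" if "0 \<le> t" "t < 1" for t
      using that u by (simp add: norm_mult)
    show ?thesis
    proof (rule differentiable_bound_general[where f'="\<lambda>t. u * deriv h (of_real t * u)"
          and \<phi>'="\<lambda>t. c / (1 - t)"])
      show "continuous_on {a..norm z} (\<lambda>t. h (of_real t * u))"
        by (rule continuous_on_compose2[OF holomorphic_on_imp_continuous_on[OF hol]])
          (use a z in_ball in \<open>auto intro!: continuous_intros\<close>)
      show "continuous_on {a..norm z} (\<lambda>t. - c * ln (1 - t))"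
        using a z by (intro continuous_intros) auto
      fix t assume t: "a < t" "t < norm z"
      have "((\<lambda>t. of_real t * u) has_vector_derivative u) (at t)"
        by (auto intro!: derivative_eq_intros)
      from field_vector_diff_chain_at[OF this holomorphic_derivI[OF hol open_ball in_ball]]
      show "((\<lambda>t. h (of_real t * u)) has_vector_derivative u * deriv h (of_real t * u)) (at t)"
        using t a z by (simp add: o_def)
      show "((\<lambda>t. - c * ln (1 - t)) has_vector_derivative c / (1 - t)) (at t)"
        unfolding has_real_derivative_iff_has_vector_derivative[symmetric]
        using t z by (auto intro!: derivative_eq_intros simp: field_simps)
      have "norm (deriv h (of_real t * u)) * (1 - t) \<le> c"
        using bnd[of "of_real t * u"] t a u by (simp add: norm_mult)
      then show "norm (u * deriv h (of_real t * u)) \<le> c / (1 - t)"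
        using t z u by (simp add: norm_mult pos_le_divide_eq)
    qed (use False a in auto)
  qed simp
  then show ?thesis
    unfolding z_eq by (simp add: u_def algebra_simps)
qed

lemma holomorphic_log_growth:
  fixes h :: "complex \<Rightarrow> complex"
  assumes hol: "h holomorphic_on ball 0 1" and "r0 < 1"
    and bnd: "\<And>z. r0 < norm z \<Longrightarrow> norm z < 1 \<Longrightarrow> norm (deriv h z) * (1 - norm z) \<le> c"
  obtains M where "\<And>z. z \<in> ball 0 1 \<Longrightarrow> norm (h z) \<le> M - c * ln (1 - norm z)"
proof -
  define r1 where "r1 = (1 + max 0 r0) / 2"
  have r1: "0 < r1" "r0 < r1" "r1 < 1"
    using \<open>r0 < 1\<close> unfolding r1_def by auto
  have "0 \<le> norm (deriv h (of_real r1)) * (1 - r1)"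
    using r1 by simp
  also have "\<dots> \<le> c"
    using bnd[of "of_real r1"] r1 by simp
  finally have c: "0 \<le> c" .
  have "cball 0 r1 \<subseteq> ball (0::complex) 1"
    using r1 by (simp add: cball_subset_ball_iff)
  then have "compact (h ` cball 0 r1)"
    by (meson compact_cball compact_continuous_image holomorphic_on_imp_continuous_on
        holomorphic_on_subset[OF hol])
  then obtain M where M: "\<And>w. w \<in> cball 0 r1 \<Longrightarrow> norm (h w) \<le> M"
    using compact_imp_bounded[of "h ` cball 0 r1"] unfolding bounded_iff by blast
  have "norm (h z) \<le> M - c * ln (1 - norm z)" if z: "z \<in> ball 0 1" for z
  proof (cases "norm z \<le> r1")
    case True
    moreover have "c * ln (1 - norm z) \<le> 0"
      using c z by (intro mult_nonneg_nonpos) auto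
    ultimately show ?thesis
      using M[of z] by simp
  next
    case False
    have "norm (h z - h (of_real r1 * sgn z)) \<le> c * (ln (1 - r1) - ln (1 - norm z))"
      using z False r1 by (intro radial_increment_le[OF hol] bnd) auto
    moreover have "norm (h (of_real r1 * sgn z)) \<le> M"
      using M r1 False by (simp add: norm_mult norm_sgn)
    moreover have "c * ln (1 - r1) \<le> 0"
      using c r1 by (simp add: mult_nonneg_nonpos)
    moreover have "norm (h z) \<le> norm (h (of_real r1 * sgn z)) + norm (h z - h (of_real r1 * sgn z))"
      by (rule norm_triangle_sub)
    ultimately show ?thesis
      by (simp add: algebra_simps)
  qed
  then show ?thesis
    using that by blast
qed

section \<open>A crude distortion estimate for the class S\<close>

lemma classS_omits_value_le_2:
  assumes "classS f"
  obtains w where "w \<notin> f ` ball 0 1" "norm w \<le> 2"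
proof -
  note f = classS_D[OF assms]
  have "\<not> cball 0 2 \<subseteq> f ` ball 0 1"
  proof
    assume sub: "cball 0 2 \<subseteq> f ` ball 0 1"
    obtain g where g: "g holomorphic_on f ` ball 0 1"
        "\<And>z. z \<in> ball 0 1 \<Longrightarrow> deriv f z * deriv g (f z) = 1"
        "\<And>z. z \<in> ball 0 1 \<Longrightarrow> g (f z) = z"
      using holomorphic_has_inverse[OF f(1) open_ball f(2)] by blast
    \<comment> \<open>\<open>g\<close> maps the disc of radius 2 into the unit disc, so Cauchy's estimate bounds \<open>g'(0) = 1\<close> by 1/2.\<close>
    have "norm ((deriv ^^ 1) g 0) \<le> fact 1 * 1 / 2 ^ 1"
    proof (rule Cauchy_higher_deriv_bound[where y=0])
      show "g holomorphic_on ball 0 2"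
        using g(1) sub ball_subset_cball holomorphic_on_subset by blast
      show "continuous_on (cball 0 2) g"
        using g(1) sub holomorphic_on_imp_continuous_on holomorphic_on_subset by blast
      fix w :: complex assume "w \<in> ball 0 2"
      then obtain z where "z \<in> ball 0 1" "w = f z"
        using sub ball_subset_cball by blast
      then show "g w \<in> ball 0 1"
        using g(3) by simp
    qed auto
    moreover have "deriv g 0 = 1"
      using g(2)[of 0] f(3,4) by simp
    ultimately show False
      by simp
  qed
  then obtain w where "w \<in> cball 0 2" "w \<notin> f ` ball 0 1"
    by blast
  then show ?thesis
    using that by simp
qed

lemma classS_sqrt_omitted:
  assumes "classS f" and w: "w \<notin> f ` ball 0 1"
  obtains g where "g holomorphic_on ball 0 1" "g 0 = 1"
    "\<And>z. z \<in> ball 0 1 \<Longrightarrow> f z = w * (1 - g z ^ 2)"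
    "\<And>z. z \<in> ball 0 1 \<Longrightarrow> g z \<noteq> 0 \<and> g z \<noteq> -1"
proof -
  note f = classS_D[OF assms(1)]
  have "w \<noteq> 0"
    using w f(3) by force
  define q where "q z = 1 - f z / w" for z
  have q: "q z \<noteq> 0" if "z \<in> ball 0 1" for z
    using w \<open>w \<noteq> 0\<close> that unfolding q_def by (auto simp: field_simps)
  have hol_q: "q holomorphic_on ball 0 1"
    unfolding q_def using \<open>w \<noteq> 0\<close> by (intro holomorphic_intros f(1))
  obtain g0 where g0: "g0 holomorphic_on ball 0 1" "\<And>z. z \<in> ball 0 1 \<Longrightarrow> q z = g0 z ^ 2"
    using contractible_imp_holomorphic_sqrt[OF hol_q convex_imp_contractible[OF convex_ball] q]
    by blast
  have "g0 0 ^ 2 = 1"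
    using g0(2)[of 0] f(3) unfolding q_def by simp
  define g where "g z = g0 z * g0 0" for z
  have g_sq: "q z = g z ^ 2" if "z \<in> ball 0 1" for z
    using g0(2)[OF that] \<open>g0 0 ^ 2 = 1\<close> unfolding g_def by (simp add: power_mult_distrib)
  have g_0: "g 0 = 1"
    using \<open>g0 0 ^ 2 = 1\<close> unfolding g_def by (simp add: power2_eq_square)
  show ?thesis
  proof
    show "g holomorphic_on ball 0 1"
      unfolding g_def by (intro holomorphic_intros g0(1))
    fix z :: complex assume z: "z \<in> ball 0 1"
    show "f z = w * (1 - g z ^ 2)"
      using g_sq[OF z] \<open>w \<noteq> 0\<close> unfolding q_def by (simp add: field_simps)
    have "g z \<noteq> -1"
    proof
      assume "g z = -1"
      then have "f z = f 0"
        using g_sq[OF z] \<open>w \<noteq> 0\<close> f(3) unfolding q_def by simp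
      then have "z = 0"
        using f(2) z by (auto dest: inj_onD)
      then show False
        using \<open>g z = -1\<close> g_0 by simp
    qed
    then show "g z \<noteq> 0 \<and> g z \<noteq> -1"
      using g_sq[OF z] q[OF z] by auto
  qed (fact g_0)
qed

lemma classS_bounded_half_disc:
  obtains C where "0 < C" "\<And>f z. classS f \<Longrightarrow> norm z \<le> 1/2 \<Longrightarrow> norm (f z) \<le> C"
proof -
  define M where "M = exp (pi * exp (pi * (2 + 2 * 1 + 12 * (2/3) / (1 - 2/3))))"
  have "norm (f z) \<le> 2 * (1 + M\<^sup>2)" if f: "classS f" and z: "norm z \<le> 1/2" for f z
  proof -
    obtain w where w: "w \<notin> f ` ball 0 1" "norm w \<le> 2"
      using classS_omits_value_le_2[OF f] by blast
    obtain g where g: "g holomorphic_on ball 0 1" "g 0 = 1"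
        "\<And>z. z \<in> ball 0 1 \<Longrightarrow> f z = w * (1 - g z ^ 2)"
        "\<And>z. z \<in> ball 0 1 \<Longrightarrow> g z \<noteq> 0 \<and> g z \<noteq> -1"
      using classS_sqrt_omitted[OF f w(1)] by blast
    have scaled: "3/4 * \<zeta> \<in> ball 0 1" if "\<zeta> \<in> cball 0 1" for \<zeta> :: complex
      using that by (simp add: norm_mult)
    have "norm (- g (3/4 * (4/3 * z))) \<le> M"
      unfolding M_def
    proof (rule Schottky[where f="\<lambda>\<zeta>. - g (3/4 * \<zeta>)"])
      have "(g \<circ> (\<lambda>\<zeta>. 3/4 * \<zeta>)) holomorphic_on cball 0 1"
        by (rule holomorphic_on_compose_gen[OF _ g(1)]) (auto intro!: holomorphic_intros simp: scaled)
      then show "(\<lambda>\<zeta>. - g (3/4 * \<zeta>)) holomorphic_on cball 0 1"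
        unfolding o_def by (rule holomorphic_on_minus)
      show "\<not> (- g (3/4 * \<zeta>) = 0 \<or> - g (3/4 * \<zeta>) = 1)" if "\<zeta> \<in> cball 0 1" for \<zeta>
        using g(4)[OF scaled[OF that]] by (auto simp: minus_equation_iff)
    qed (use z g(2) in \<open>auto simp: norm_mult\<close>)
    then have "norm (g z) \<le> M"
      by simp
    have "norm (f z) = norm w * norm (1 - g z ^ 2)"
      using g(3)[of z] z by (simp add: norm_mult)
    also have "\<dots> \<le> 2 * (1 + M\<^sup>2)"
    proof (rule mult_mono)
      have "norm (1 - g z ^ 2) \<le> 1 + norm (g z) ^ 2"
        by (metis norm_one norm_power norm_triangle_ineq4)
      also have "\<dots> \<le> 1 + M\<^sup>2"
        using \<open>norm (g z) \<le> M\<close> by (simp add: power_mono)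
      finally show "norm (1 - g z ^ 2) \<le> 1 + M\<^sup>2" .
    qed (use w in auto)
    finally show ?thesis .
  qed
  moreover have "0 < 2 * (1 + M\<^sup>2)"
    by (simp add: add_pos_nonneg)
  ultimately show ?thesis
    using that by blast
qed

text \<open>\<^term>\<open>Moebius_function 0 (- a) \<zeta>\<close> is \<open>(\<zeta> + a) / (1 + cnj a * \<zeta>)\<close>.\<close>

definition koebe_transform :: "(complex \<Rightarrow> complex) \<Rightarrow> complex \<Rightarrow> complex \<Rightarrow> complex" where
  "koebe_transform f a \<zeta> = (f (Moebius_function 0 (- a) \<zeta>) - f a) / (of_real (1 - (norm a)\<^sup>2) * deriv f a)"

lemma Moebius_function_has_derivative_0:
  "(Moebius_function 0 (- a) has_field_derivative of_real (1 - (norm a)\<^sup>2)) (at 0)"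
proof -
  have "((\<lambda>\<zeta>. (\<zeta> + a) / (1 + cnj a * \<zeta>)) has_field_derivative 1 - a * cnj a) (at 0)"
    by (rule derivative_eq_intros refl | simp)+
  then show ?thesis
    by (simp add: Moebius_function_def flip: complex_norm_square)
qed

lemma classS_koebe_transform:
  assumes f: "classS f" and a: "a \<in> ball 0 1"
  shows "classS (koebe_transform f a)"
proof -
  note f = classS_D[OF f]
  define \<phi> where "\<phi> = Moebius_function 0 (- a)"
  have \<phi>_ball: "\<phi> \<zeta> \<in> ball 0 1" if "\<zeta> \<in> ball 0 1" for \<zeta>
    using Moebius_function_norm_lt_1[of "- a" \<zeta>] a that unfolding \<phi>_def by simp
  have \<phi>_inv: "Moebius_function 0 a (\<phi> \<zeta>) = \<zeta>" if "\<zeta> \<in> ball 0 1" for \<zeta>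
    using Moebius_function_compose[of a "- a" \<zeta>] a that unfolding \<phi>_def by simp
  have \<phi>_0: "\<phi> 0 = a"
    unfolding \<phi>_def by (simp add: Moebius_function_of_zero)
  have "0 < 1 - (norm a)\<^sup>2"
    using a by (simp add: abs_square_less_1)
  then have den: "of_real (1 - (norm a)\<^sup>2) * deriv f a \<noteq> 0"
    using f(6)[OF a] by (metis less_irrefl mult_eq_0_iff of_real_eq_0_iff)
  have "(f \<circ> \<phi>) holomorphic_on ball 0 1"
    using Moebius_function_holomorphic[of "- a"] a \<phi>_ball unfolding \<phi>_def
    by (intro holomorphic_on_compose_gen[OF _ f(1)]) auto
  then have hol: "koebe_transform f a holomorphic_on ball 0 1"
    unfolding koebe_transform_def[abs_def] \<phi>_def o_def using den by (intro holomorphic_intros)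
  have "inj_on (koebe_transform f a) (ball 0 1)"
  proof (rule inj_onI)
    fix x y assume x: "x \<in> ball 0 1" and y: "y \<in> ball 0 1"
      and "koebe_transform f a x = koebe_transform f a y"
    then have "f (\<phi> x) = f (\<phi> y)"
      using den unfolding koebe_transform_def \<phi>_def by (simp add: divide_cancel_right)
    then have "\<phi> x = \<phi> y"
      using f(2) \<phi>_ball[OF x] \<phi>_ball[OF y] by (auto dest: inj_onD)
    then show "x = y"
      using \<phi>_inv[OF x] \<phi>_inv[OF y] by metis
  qed
  moreover have "deriv (koebe_transform f a) 0 = 1"
  proof -
    have "(f has_field_derivative deriv f a) (at (\<phi> 0))"
      using holomorphic_derivI[OF f(1) open_ball a] \<phi>_0 by simp
    from DERIV_chain2[OF this Moebius_function_has_derivative_0[of a, folded \<phi>_def]]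
    have "(koebe_transform f a has_field_derivative
        deriv f a * of_real (1 - (norm a)\<^sup>2) / (of_real (1 - (norm a)\<^sup>2) * deriv f a)) (at 0)"
      unfolding koebe_transform_def[abs_def] \<phi>_def by (auto intro!: derivative_eq_intros)
    then show ?thesis
      using den by (simp add: DERIV_imp_deriv)
  qed
  ultimately show ?thesis
    using hol \<phi>_0 unfolding classS_def koebe_transform_def \<phi>_def by simp
qed

lemma norm_Moebius_function_le_half:
  assumes a: "norm a < 1" and wa: "norm (w - a) < (1 - norm a) / 4"
  shows "norm (Moebius_function 0 a w) \<le> 1/2"
proof -
  define d where "d = 1 - norm a"
  define c where "c = 1 - (norm a)\<^sup>2"
  have "(norm a)\<^sup>2 \<le> norm a"
    using a by (simp add: power2_eq_square mult_left_le_one_le)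
  then have d: "0 < d" "d \<le> c"
    using a unfolding d_def c_def by auto
  have "1 - cnj a * w = of_real c - cnj a * (w - a)"
    unfolding c_def by (simp add: algebra_simps flip: complex_norm_square)
  moreover have "norm (cnj a * (w - a)) \<le> norm (w - a)"
    using a by (simp add: norm_mult mult_left_le_one_le)
  ultimately have "c - norm (w - a) \<le> norm (1 - cnj a * w)"
    using d norm_triangle_ineq2[of "of_real c" "cnj a * (w - a)"] by simp
  then have "3 / 4 * d \<le> norm (1 - cnj a * w)"
    using d wa unfolding d_def by simp
  then have "norm (Moebius_function 0 a w) \<le> (d / 4) / (3 / 4 * d)"
    unfolding Moebius_function_simple norm_divide
    using wa d unfolding d_def by (intro frac_le) auto
  then show ?thesis
    using d by simp
qed

lemma classS_norm_diff_le_near: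
  assumes f: "classS f" and a: "a \<in> ball 0 1"
    and C: "\<And>\<zeta>. norm \<zeta> \<le> 1/2 \<Longrightarrow> norm (koebe_transform f a \<zeta>) \<le> C"
    and w: "w \<in> ball a ((1 - norm a) / 4)"
  shows "norm (f w - f a) \<le> 2 * (1 - norm a) * norm (deriv f a) * C"
proof -
  define c where "c = 1 - (norm a)\<^sup>2"
  have "0 \<le> (1 - norm a)\<^sup>2"
    by simp
  then have "c \<le> 2 * (1 - norm a)"
    unfolding c_def by (simp add: power2_eq_square algebra_simps)
  moreover have "0 < c"
    using a unfolding c_def by (simp add: abs_square_less_1)
  ultimately have c: "0 < c" "c \<le> 2 * (1 - norm a)"
    by auto
  have wa: "norm (w - a) < (1 - norm a) / 4"
    using w by (simp add: dist_norm norm_minus_commute)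
  have "norm w \<le> norm a + norm (w - a)"
    by (metis add.commute diff_add_cancel norm_triangle_ineq)
  then have w1: "w \<in> ball 0 1"
    using wa a by (simp add: field_simps)
  have "norm (koebe_transform f a (Moebius_function 0 a w)) \<le> C"
    using a wa by (intro C norm_Moebius_function_le_half) auto
  moreover have "Moebius_function 0 (- a) (Moebius_function 0 a w) = w"
    using Moebius_function_compose[of "- a" a w] a w1 by simp
  ultimately have "norm ((f w - f a) / (of_real c * deriv f a)) \<le> C"
    unfolding koebe_transform_def c_def by simp
  then have "norm (f w - f a) \<le> c * norm (deriv f a) * C"
    using c classS_D(6)[OF f a] by (simp add: norm_divide norm_mult field_simps)
  also have "\<dots> \<le> 2 * (1 - norm a) * norm (deriv f a) * C"
    using c C[of 0] by (intro mult_right_mono) (auto simp: koebe_transform_def Moebius_function_of_zero)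
  finally show ?thesis .
qed

lemma classS_preSchwarz_bound:
  obtains C where "\<And>f z. classS f \<Longrightarrow> z \<in> ball 0 1 \<Longrightarrow> norm (preSchwarz f z) * (1 - norm z) \<le> C"
proof -
  obtain C0 where C0: "0 < C0" "\<And>f z. classS f \<Longrightarrow> norm z \<le> 1/2 \<Longrightarrow> norm (f z) \<le> C0"
    using classS_bounded_half_disc by blast
  have "norm (preSchwarz f a) * (1 - norm a) \<le> 512 * C0" if f: "classS f" and a: "a \<in> ball 0 1"
    for f a
  proof -
    note fD = classS_D[OF f]
    define d where "d = 1 - norm a"
    define B where "B = 2 * d * norm (deriv f a) * C0"
    have d: "0 < d"
      using a unfolding d_def by simp
    have B: "0 < B"
      unfolding B_def using d C0(1) fD(6)[OF a] by simp
    have sub: "cball a (d/8) \<subseteq> ball 0 1"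
      using d unfolding d_def by (simp add: cball_subset_ball_iff dist_norm field_simps)
    have "norm ((deriv ^^ 2) f a) \<le> fact 2 * (2 * B) / (d/8) ^ 2"
    proof (rule Cauchy_higher_deriv_bound[where y="f a"])
      show "f holomorphic_on ball a (d/8)"
        using fD(1) sub ball_subset_cball holomorphic_on_subset by blast
      show "continuous_on (cball a (d/8)) f"
        using fD(1) sub holomorphic_on_imp_continuous_on holomorphic_on_subset by blast
      fix w assume "w \<in> ball a (d/8)"
      then have "w \<in> ball a ((1 - norm a) / 4)"
        using d unfolding d_def by auto
      then have "norm (f w - f a) \<le> B"
        using classS_norm_diff_le_near[OF f a C0(2)[OF classS_koebe_transform[OF f a]]]
        unfolding B_def d_def by blast
      then show "f w \<in> ball (f a) (2 * B)"
        using B by (simp add: dist_norm norm_minus_commute)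
    qed (use d in auto)
    then have "norm (deriv (deriv f) a) \<le> 256 * B / d\<^sup>2"
      by (simp add: numeral_2_eq_2 power2_eq_square)
    then have "norm (preSchwarz f a) \<le> 256 * B / d\<^sup>2 / norm (deriv f a)"
      unfolding preSchwarz_def norm_divide using fD(6)[OF a] by (intro divide_right_mono) auto
    also have "\<dots> = 512 * C0 / d"
      unfolding B_def using d fD(6)[OF a] by (simp add: power2_eq_square)
    finally show ?thesis
      using d unfolding d_def by (simp add: pos_le_divide_eq)
  qed
  then show ?thesis
    using that by blast
qed

section \<open>Integral means\<close>

definition integral_mean :: "(complex \<Rightarrow> complex) \<Rightarrow> complex \<Rightarrow> real \<Rightarrow> real" where
  "integral_mean f \<tau> r = integral {-pi..pi} (\<lambda>\<theta>. norm (derpow f \<tau> (of_real r * cis \<theta>)))"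

lemma betaSpec_integral_mean:
  "betaSpec f \<tau> = Limsup (at_left 1) (\<lambda>r. ereal (ln (integral_mean f \<tau> r) / \<bar>ln (1 - r)\<bar>))"
  unfolding betaSpec_def integral_mean_def ..

lemma norm_derpow_le:
  "norm (derpow g \<tau> z) \<le> exp (norm \<tau> * norm (logderiv g z - logderiv f z)) * norm (derpow f \<tau> z)"
proof -
  have "derpow g \<tau> z = exp (\<tau> * (logderiv g z - logderiv f z)) * derpow f \<tau> z"
    unfolding derpow_def by (simp add: algebra_simps flip: exp_add)
  then show ?thesis
    using norm_exp[of "\<tau> * (logderiv g z - logderiv f z)"]
    by (simp add: norm_mult mult_right_mono)
qed

lemma norm_derpow_le_exp: "norm (derpow f \<tau> z) \<le> exp (norm \<tau> * norm (logderiv f z))"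
  unfolding derpow_def using norm_exp[of "\<tau> * logderiv f z"] by (simp add: norm_mult)

lemma continuous_on_norm_derpow_circle:
  assumes "classS f" and r: "0 \<le> r" "r < 1"
  shows "continuous_on {-pi..pi} (\<lambda>\<theta>. norm (derpow f \<tau> (of_real r * cis \<theta>)))"
proof -
  have "continuous_on {-pi..pi} (\<lambda>\<theta>. logderiv f (of_real r * cis \<theta>))"
    by (rule continuous_on_compose2[OF holomorphic_on_imp_continuous_on[OF classS_logderiv(1)[OF assms(1)]]])
      (use r in \<open>auto intro!: continuous_intros simp: norm_mult\<close>)
  then show ?thesis
    unfolding derpow_def by (intro continuous_intros)
qed

lemma integrable_norm_derpow_circle:
  assumes "classS f" and "0 \<le> r" "r < 1"
  shows "(\<lambda>\<theta>. norm (derpow f \<tau> (of_real r * cis \<theta>))) integrable_on {-pi..pi}"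
  by (rule integrable_continuous_interval[OF continuous_on_norm_derpow_circle[OF assms]])

lemma integral_mean_pos:
  assumes "classS f" and r: "0 \<le> r" "r < 1"
  shows "0 < integral_mean f \<tau> r"
proof -
  let ?F = "\<lambda>\<theta>. norm (derpow f \<tau> (of_real r * cis \<theta>))"
  have cont: "continuous_on {-pi..pi} ?F"
    using continuous_on_norm_derpow_circle[OF assms] .
  obtain \<theta>0 where "\<theta>0 \<in> {-pi..pi}" "\<And>\<theta>. \<theta> \<in> {-pi..pi} \<Longrightarrow> ?F \<theta>0 \<le> ?F \<theta>"
    using continuous_attains_inf[OF compact_Icc _ cont] by auto
  then have "integral {-pi..pi} (\<lambda>\<theta>. ?F \<theta>0) \<le> integral_mean f \<tau> r"
    unfolding integral_mean_def using integrable_norm_derpow_circle[OF assms]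
    by (intro integral_le) auto
  moreover have "0 < ?F \<theta>0"
    unfolding derpow_def by simp
  then have "0 < integral {-pi..pi} (\<lambda>\<theta>. ?F \<theta>0)"
    by simp
  ultimately show ?thesis
    by linarith
qed

lemma integral_mean_le_integral_mean:
  assumes "classS f" "classS g" and r: "0 \<le> r" "r < 1"
    and B: "\<And>\<theta>. norm (logderiv g (of_real r * cis \<theta>) - logderiv f (of_real r * cis \<theta>)) \<le> B"
  shows "integral_mean g \<tau> r \<le> exp (norm \<tau> * B) * integral_mean f \<tau> r"
proof -
  have "integral_mean g \<tau> r
      \<le> integral {-pi..pi} (\<lambda>\<theta>. exp (norm \<tau> * B) * norm (derpow f \<tau> (of_real r * cis \<theta>)))"
    unfolding integral_mean_def
  proof (rule integral_le)
    show "(\<lambda>\<theta>. exp (norm \<tau> * B) * norm (derpow f \<tau> (of_real r * cis \<theta>))) integrable_on {-pi..pi}"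
      using integrable_cmul[OF integrable_norm_derpow_circle[OF assms(1) r]] by simp
    fix \<theta>
    let ?z = "of_real r * cis \<theta>"
    have "norm (derpow g \<tau> ?z) \<le> exp (norm \<tau> * norm (logderiv g ?z - logderiv f ?z)) * norm (derpow f \<tau> ?z)"
      by (rule norm_derpow_le)
    also have "\<dots> \<le> exp (norm \<tau> * B) * norm (derpow f \<tau> ?z)"
      using mult_left_mono[OF B[of \<theta>] norm_ge_zero[of \<tau>]] by (intro mult_right_mono) simp_all
    finally show "norm (derpow g \<tau> ?z) \<le> exp (norm \<tau> * B) * norm (derpow f \<tau> ?z)" .
  qed (rule integrable_norm_derpow_circle[OF assms(2) r])
  then show ?thesis
    unfolding integral_mean_def by simp
qed

lemma integral_mean_le:
  assumes "classS f" and r: "0 \<le> r" "r < 1"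
    and B: "\<And>\<theta>. norm (logderiv f (of_real r * cis \<theta>)) \<le> B"
  shows "integral_mean f \<tau> r \<le> 2 * pi * exp (norm \<tau> * B)"
proof -
  have "integral_mean f \<tau> r \<le> integral {-pi..pi} (\<lambda>\<theta>. exp (norm \<tau> * B))"
    unfolding integral_mean_def
  proof (intro integral_le integrable_const_ivl integrable_norm_derpow_circle[OF assms(1) r])
    fix \<theta>
    show "norm (derpow f \<tau> (of_real r * cis \<theta>)) \<le> exp (norm \<tau> * B)"
      using norm_derpow_le_exp[of f \<tau> "of_real r * cis \<theta>"] mult_left_mono[OF B[of \<theta>] norm_ge_zero[of \<tau>]]
      by (metis exp_le_cancel_iff order.trans)
  qed
  then show ?thesis
    by simp
qed

lemma log_ratio_le_of_le_powr:
  fixes X Y K a r :: real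
  assumes "0 < K" "0 < X" "0 < Y" "X \<le> K * (1 - r) powr (- a) * Y" and r: "0 < r" "r < 1"
  shows "ln X / \<bar>ln (1 - r)\<bar> \<le> ln Y / \<bar>ln (1 - r)\<bar> + a + ln K / \<bar>ln (1 - r)\<bar>"
proof -
  define L where "L = - ln (1 - r)"
  have L: "0 < L" "\<bar>ln (1 - r)\<bar> = L"
    using r unfolding L_def by auto
  have "ln X \<le> ln (K * (1 - r) powr (- a) * Y)"
    using assms by simp
  also have "\<dots> = ln K + a * L + ln Y"
    using assms by (simp add: ln_mult ln_powr L_def)
  finally have "ln X / L \<le> ln K / L + a + ln Y / L"
    using L(1) by (simp add: field_simps)
  then show ?thesis
    unfolding L(2) by simp
qed

lemma Limsup_log_ratio_le:
  fixes X Y :: "real \<Rightarrow> real"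
  assumes K: "0 < K"
    and ev: "\<forall>\<^sub>F r in at_left 1. 0 < X r \<and> 0 < Y r \<and> X r \<le> K * (1 - r) powr (- a) * Y r"
  shows "Limsup (at_left 1) (\<lambda>r. ereal (ln (X r) / \<bar>ln (1 - r)\<bar>))
    \<le> Limsup (at_left 1) (\<lambda>r. ereal (ln (Y r) / \<bar>ln (1 - r)\<bar>)) + ereal a"
proof (rule ereal_le_epsilon2)
  fix \<delta> :: real assume \<delta>: "0 < \<delta>"
  have small: "ln K / \<bar>ln (1 - r)\<bar> \<le> \<delta>" if r: "max 0 (1 - exp (- (\<bar>ln K\<bar> / \<delta>))) < r" "r < 1" for r
  proof -
    have "1 - r < exp (- (\<bar>ln K\<bar> / \<delta>))"
      using r by simp
    then have "ln (1 - r) < - (\<bar>ln K\<bar> / \<delta>)"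
      using r by (metis ln_exp ln_less_cancel_iff diff_gt_0_iff_gt exp_gt_zero)
    moreover have "0 \<le> \<bar>ln K\<bar> / \<delta>"
      using \<delta> by simp
    ultimately have "\<bar>ln K\<bar> / \<delta> < \<bar>ln (1 - r)\<bar>" "0 < \<bar>ln (1 - r)\<bar>"
      by auto
    then have "\<bar>ln K\<bar> < \<delta> * \<bar>ln (1 - r)\<bar>"
      using \<delta> by (simp add: pos_divide_less_eq mult.commute)
    then show ?thesis
      unfolding pos_divide_le_eq[OF \<open>0 < \<bar>ln (1 - r)\<bar>\<close>] using abs_ge_self[of "ln K"] by linarith
  qed
  have "\<forall>\<^sub>F r in at_left 1. max 0 (1 - exp (- (\<bar>ln K\<bar> / \<delta>))) < r \<and> r < 1"
    using eventually_at_left_real[of "max 0 (1 - exp (- (\<bar>ln K\<bar> / \<delta>)))" 1] by simp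
  then have "\<forall>\<^sub>F r in at_left 1. ereal (ln (X r) / \<bar>ln (1 - r)\<bar>)
      \<le> ereal (ln (Y r) / \<bar>ln (1 - r)\<bar>) + ereal (a + \<delta>)"
    using ev
  proof eventually_elim
    case (elim r)
    then show ?case
      using log_ratio_le_of_le_powr[where X="X r" and Y="Y r" and a=a and r=r, OF K] small[of r] by auto
  qed
  then have "Limsup (at_left 1) (\<lambda>r. ereal (ln (X r) / \<bar>ln (1 - r)\<bar>))
      \<le> Limsup (at_left 1) (\<lambda>r. ereal (ln (Y r) / \<bar>ln (1 - r)\<bar>) + ereal (a + \<delta>))"
    by (rule Limsup_mono)
  also have "\<dots> = Limsup (at_left 1) (\<lambda>r. ereal (ln (Y r) / \<bar>ln (1 - r)\<bar>)) + ereal a + ereal \<delta>"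
    by (subst Limsup_add_ereal_right) (simp_all add: add.assoc)
  finally show "Limsup (at_left 1) (\<lambda>r. ereal (ln (X r) / \<bar>ln (1 - r)\<bar>))
      \<le> Limsup (at_left 1) (\<lambda>r. ereal (ln (Y r) / \<bar>ln (1 - r)\<bar>)) + ereal a + ereal \<delta>" .
qed

lemma exp_log_growth_eq_powr:
  fixes r t M c :: real
  assumes "r < 1"
  shows "exp (t * (M - c * ln (1 - r))) = exp (t * M) * (1 - r) powr (- (t * c))"
  using assms by (simp add: powr_def right_diff_distrib exp_diff exp_minus divide_inverse mult.assoc)

lemma betaSpec_finite:
  assumes "classS f"
  shows "betaSpec f \<tau> < \<infinity>"
proof -
  note L = classS_logderiv[OF assms]
  obtain C where C: "\<And>f z. classS f \<Longrightarrow> z \<in> ball 0 1 \<Longrightarrow> norm (preSchwarz f z) * (1 - norm z) \<le> C"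
    using classS_preSchwarz_bound by blast
  obtain M where M: "\<And>z. z \<in> ball 0 1 \<Longrightarrow> norm (logderiv f z) \<le> M - C * ln (1 - norm z)"
    using holomorphic_log_growth[OF L(1), of 0 C] C[OF assms] deriv_logderiv[OF assms] by force
  have "\<forall>\<^sub>F r in at_left 1. 0 < integral_mean f \<tau> r \<and> 0 < (1::real)
      \<and> integral_mean f \<tau> r \<le> 2 * pi * exp (norm \<tau> * M) * (1 - r) powr (- (norm \<tau> * C)) * 1"
    using eventually_at_left_real[OF zero_less_one]
  proof eventually_elim
    case (elim r)
    have "norm (logderiv f (of_real r * cis \<theta>)) \<le> M - C * ln (1 - r)" for \<theta>
      using M[of "of_real r * cis \<theta>"] elim by (simp add: norm_mult)
    then have "integral_mean f \<tau> r \<le> 2 * pi * exp (norm \<tau> * (M - C * ln (1 - r)))"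
      using elim by (intro integral_mean_le[OF assms]) auto
    then show ?case
      using elim integral_mean_pos[OF assms, of r \<tau>] by (simp add: exp_log_growth_eq_powr)
  qed
  then have "betaSpec f \<tau> \<le> Limsup (at_left 1) (\<lambda>r. ereal (ln 1 / \<bar>ln (1 - r)\<bar>)) + ereal (norm \<tau> * C)"
    unfolding betaSpec_integral_mean by (intro Limsup_log_ratio_le) auto
  then have "betaSpec f \<tau> \<le> ereal (norm \<tau> * C)"
    by (simp add: Limsup_const)
  then show ?thesis
    by (cases "betaSpec f \<tau>") auto
qed

lemma betaSpec_le_add:
  assumes f: "classS f" and g: "classS g" and "r0 < 1"
    and bnd: "\<And>z. r0 < norm z \<Longrightarrow> norm z < 1 \<Longrightarrow>
      norm (preSchwarz g z - preSchwarz f z) * (1 - (norm z)\<^sup>2) \<le> c"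
  shows "betaSpec g \<tau> \<le> betaSpec f \<tau> + ereal (norm \<tau> * c)"
proof -
  note Lf = classS_logderiv[OF f] and Lg = classS_logderiv[OF g]
  define h where "h z = logderiv g z - logderiv f z" for z
  have hol: "h holomorphic_on ball 0 1"
    unfolding h_def by (intro holomorphic_intros Lf(1) Lg(1))
  have "norm (deriv h z) * (1 - norm z) \<le> c" if z: "r0 < norm z" "norm z < 1" for z
  proof -
    have zb: "z \<in> ball 0 1"
      using z by simp
    have "deriv h z = preSchwarz g z - preSchwarz f z"
      unfolding h_def using deriv_diff holomorphic_on_imp_differentiable_at[OF _ open_ball zb]
        Lf(1) Lg(1) deriv_logderiv[OF f zb] deriv_logderiv[OF g zb] by metis
    moreover have "1 - norm z \<le> 1 - (norm z)\<^sup>2"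
      using z by (simp add: power2_eq_square mult_left_le_one_le)
    ultimately show ?thesis
      using bnd[OF z] by (smt (verit) mult_left_mono norm_ge_zero)
  qed
  then obtain M where M: "\<And>z. z \<in> ball 0 1 \<Longrightarrow> norm (h z) \<le> M - c * ln (1 - norm z)"
    using holomorphic_log_growth[OF hol \<open>r0 < 1\<close>] by blast
  have "\<forall>\<^sub>F r in at_left 1. 0 < integral_mean g \<tau> r \<and> 0 < integral_mean f \<tau> r
      \<and> integral_mean g \<tau> r \<le> exp (norm \<tau> * M) * (1 - r) powr (- (norm \<tau> * c)) * integral_mean f \<tau> r"
    using eventually_at_left_real[OF zero_less_one]
  proof eventually_elim
    case (elim r)
    have "norm (h (of_real r * cis \<theta>)) \<le> M - c * ln (1 - r)" for \<theta>
      using M[of "of_real r * cis \<theta>"] elim by (simp add: norm_mult)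
    then have "integral_mean g \<tau> r \<le> exp (norm \<tau> * (M - c * ln (1 - r))) * integral_mean f \<tau> r"
      using elim unfolding h_def by (intro integral_mean_le_integral_mean[OF f g]) auto
    then show ?case
      using elim integral_mean_pos[OF f, of r \<tau>] integral_mean_pos[OF g, of r \<tau>]
      by (simp add: exp_log_growth_eq_powr)
  qed
  then show ?thesis
    unfolding betaSpec_integral_mean by (intro Limsup_log_ratio_le) auto
qed

lemma betaSpec_close:
  assumes f: "classS f" and g: "classS g" and "\<tau> \<noteq> 0" and "r0 < 1"
    and sup: "(SUP z\<in>{z. r0 < norm z \<and> norm z < 1}.
      ereal (norm (preSchwarz g z - preSchwarz f z) * (1 - (norm z)\<^sup>2))) < ereal (\<epsilon> / norm \<tau>)"
  shows "betaSpec g \<tau> \<le> betaSpec f \<tau> + ereal \<epsilon>" and "betaSpec f \<tau> \<le> betaSpec g \<tau> + ereal \<epsilon>"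
proof -
  have bnd: "norm (preSchwarz g z - preSchwarz f z) * (1 - (norm z)\<^sup>2) \<le> \<epsilon> / norm \<tau>"
    if "r0 < norm z" "norm z < 1" for z
  proof -
    have "ereal (norm (preSchwarz g z - preSchwarz f z) * (1 - (norm z)\<^sup>2))
        \<le> (SUP z\<in>{z. r0 < norm z \<and> norm z < 1}.
             ereal (norm (preSchwarz g z - preSchwarz f z) * (1 - (norm z)\<^sup>2)))"
      by (rule SUP_upper) (use that in auto)
    then have "ereal (norm (preSchwarz g z - preSchwarz f z) * (1 - (norm z)\<^sup>2)) < ereal (\<epsilon> / norm \<tau>)"
      using sup by (rule order.strict_trans1)
    then show ?thesis
      by simp
  qed
  have "norm \<tau> * (\<epsilon> / norm \<tau>) = \<epsilon>"
    using \<open>\<tau> \<noteq> 0\<close> by simp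
  then show "betaSpec g \<tau> \<le> betaSpec f \<tau> + ereal \<epsilon>" "betaSpec f \<tau> \<le> betaSpec g \<tau> + ereal \<epsilon>"
    using betaSpec_le_add[OF f g \<open>r0 < 1\<close> bnd, of \<tau>]
      betaSpec_le_add[OF g f \<open>r0 < 1\<close>, of "\<epsilon> / norm \<tau>" \<tau>] bnd
    by (simp_all add: norm_minus_commute)
qed

lemma ereal_abs_diff_le:
  fixes x y :: ereal
  assumes "\<bar>y\<bar> \<noteq> \<infinity>" "x \<le> y + ereal e" "y \<le> x + ereal e"
  shows "\<bar>x - y\<bar> \<le> ereal e"
  using assms by (cases x; cases y) auto

theorem mainTheorem11:
  fixes f g :: "complex \<Rightarrow> complex" and \<tau> :: complex
  assumes "classS f" and "classS g" and "\<tau> \<noteq> 0"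
  shows "(\<forall>\<epsilon> r0. betaSpec f \<tau> > 0 \<and> 0 < \<epsilon> \<and> ereal \<epsilon> < betaSpec f \<tau> \<and> 0 < r0 \<and> r0 < 1 \<and>
            (SUP z\<in>{z. r0 < norm z \<and> norm z < 1}.
               ereal (norm (preSchwarz g z - preSchwarz f z) * (1 - (norm z)\<^sup>2)))
              < ereal (\<epsilon> / norm \<tau>)
          \<longrightarrow> \<bar>betaSpec g \<tau> - betaSpec f \<tau>\<bar> \<le> ereal \<epsilon>)
       \<and> (\<forall>\<epsilon> r0. betaSpec f \<tau> = 0 \<and> 0 < \<epsilon> \<and> 0 < r0 \<and> r0 < 1 \<and>
            (SUP z\<in>{z. r0 < norm z \<and> norm z < 1}.
               ereal (norm (preSchwarz g z - preSchwarz f z) * (1 - (norm z)\<^sup>2)))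
              < ereal (\<epsilon> / norm \<tau>)
          \<longrightarrow> betaSpec g \<tau> \<le> ereal \<epsilon>)"
proof (intro conjI allI impI)
  fix \<epsilon> r0 :: real
  assume h: "betaSpec f \<tau> > 0 \<and> 0 < \<epsilon> \<and> ereal \<epsilon> < betaSpec f \<tau> \<and> 0 < r0 \<and> r0 < 1 \<and>
    (SUP z\<in>{z. r0 < norm z \<and> norm z < 1}.
      ereal (norm (preSchwarz g z - preSchwarz f z) * (1 - (norm z)\<^sup>2))) < ereal (\<epsilon> / norm \<tau>)"
  have "\<bar>betaSpec f \<tau>\<bar> \<noteq> \<infinity>"
    using h betaSpec_finite[OF assms(1), of \<tau>] by auto
  then show "\<bar>betaSpec g \<tau> - betaSpec f \<tau>\<bar> \<le> ereal \<epsilon>"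
    using h betaSpec_close[OF assms, of r0 \<epsilon>] by (intro ereal_abs_diff_le) auto
next
  fix \<epsilon> r0 :: real
  assume "betaSpec f \<tau> = 0 \<and> 0 < \<epsilon> \<and> 0 < r0 \<and> r0 < 1 \<and>
    (SUP z\<in>{z. r0 < norm z \<and> norm z < 1}.
      ereal (norm (preSchwarz g z - preSchwarz f z) * (1 - (norm z)\<^sup>2))) < ereal (\<epsilon> / norm \<tau>)"
  then show "betaSpec g \<tau> \<le> ereal \<epsilon>"
    using betaSpec_close(1)[OF assms, of r0 \<epsilon>] by simp
qed

end
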